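(* Let $C:\mathbb{R}^n\to\mathbb{R}$ be convex, increasing and $\mathbf 1$-invariant with $C(\vec 0)>0$. Then for every $\vec q\in\mathbb{R}^n_{>0}$ there exists a unique $\alpha>0$ with $C(-\vec q/\alpha)=0$; hence $\varphi:\mathbb{R}^n_{>0}\to\mathbb{R}$, $\varphi(\vec q)=$ this $\alpha$, is well-defined.
   Context: $\mathbf 1=(1,\dots,1)$. $C$ is $\mathbf 1$-invariant if $C(\vec q+\alpha\mathbf 1)=C(\vec q)+\alpha$ for all $\vec q,\alpha$; increasing if $C(\vec q)>C(\vec q')$ whenever $\vec q\succeq\vec q'$ coordinatewise and $\vec q\neq\vec q'$. $\mathbb{R}^n_{>0}$ is the set of vectors with all coordinates strictly positive. *)

theory Defs
  imports "HOL-Analysis.Analysis"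
begin

definition ones :: "real ^ 'n" where
  "ones = (\<chi> i. 1)"

definition one_invariant :: "(real ^ 'n \<Rightarrow> real) \<Rightarrow> bool" where
  "one_invariant C \<longleftrightarrow> (\<forall>q \<alpha>. C (q + \<alpha> *\<^sub>R ones) = C q + \<alpha>)"

definition increasing_fn :: "(real ^ 'n \<Rightarrow> real) \<Rightarrow> bool" where
  "increasing_fn C \<longleftrightarrow> (\<forall>q q'. (\<forall>i. q $ i \<ge> q' $ i) \<and> q \<noteq> q' \<longrightarrow> C q > C q')"

end

theory Submission
  imports Defs
begin

text \<open>Along the ray \<open>t \<mapsto> -t q\<close> with \<open>q > 0\<close>, an increasing \<open>C\<close> is strictly decreasing in \<open>t\<close>.
  It starts at \<open>C 0 > 0\<close>, and since \<open>-t q \<le> -t (min q) \<one>\<close>, \<open>\<one>\<close>-invariance gives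
  \<open>C (-t q) \<le> C 0 - t min q\<close>, which is \<open>\<le> 0\<close> for large \<open>t\<close>. Convexity makes \<open>C\<close> continuous,
  so by the intermediate value theorem the ray crosses the zero set of \<open>C\<close> exactly once, at some
  \<open>t > 0\<close>; then \<open>\<alpha> = 1/t\<close>.\<close>

lemma increasing_fn_imp_mono:
  assumes "increasing_fn C" and "\<forall>i. x $ i \<le> y $ i"
  shows "C x \<le> C y"
  using assms unfolding increasing_fn_def by (cases "x = y") (auto intro: less_imp_le)

lemma increasing_fn_diff_scaleR_less:
  assumes "increasing_fn C" and "\<forall>i. q $ i > 0" and "s < t"
  shows "C (x - t *\<^sub>R q) < C (x - s *\<^sub>R q)"
proof -
  have "\<forall>i. (x - t *\<^sub>R q) $ i \<le> (x - s *\<^sub>R q) $ i"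
    using assms(2,3) by (auto intro: mult_right_mono less_imp_le)
  moreover have "(x - t *\<^sub>R q) $ i \<noteq> (x - s *\<^sub>R q) $ i" for i
    using assms(2)[rule_format, of i] assms(3) by simp
  ultimately show ?thesis
    using assms(1) unfolding increasing_fn_def by (metis order.refl)
qed

lemma increasing_fn_diff_scaleR_inj:
  assumes "increasing_fn C" and "\<forall>i. q $ i > 0"
    and "C (x - s *\<^sub>R q) = C (x - t *\<^sub>R q)"
  shows "s = t"
  using increasing_fn_diff_scaleR_less[OF assms(1,2)] assms(3)
  by (metis less_irrefl linorder_neqE)

lemma one_invariant_diff:
  assumes "one_invariant C"
  shows "C (x - \<alpha> *\<^sub>R ones) = C x - \<alpha>"
  using assms unfolding one_invariant_def by (metis diff_conv_add_uminus scaleR_minus_left)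

lemma one_invariant_ray_le:
  assumes "increasing_fn C" and "one_invariant C"
    and "\<forall>i. m \<le> q $ i" and "t \<ge> 0"
  shows "C (- (t *\<^sub>R q)) \<le> C 0 - t * m"
proof -
  have "C (- (t *\<^sub>R q)) \<le> C (0 - (t * m) *\<^sub>R ones)"
    using assms(3,4) by (intro increasing_fn_imp_mono[OF assms(1)])
      (auto simp: ones_def intro: mult_left_mono)
  then show ?thesis
    using one_invariant_diff[OF assms(2), of 0 "t * m"] by simp
qed

lemma ex1_zero_on_ray:
  fixes C :: "real ^ 'n \<Rightarrow> real"
  assumes "continuous_on UNIV C" and "increasing_fn C" and "one_invariant C"
    and "C 0 > 0" and q_pos: "\<forall>i. q $ i > 0"
  shows "\<exists>!t. t > 0 \<and> C (- (t *\<^sub>R q)) = 0"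
proof -
  define m where "m = Min (range (\<lambda>i. q $ i))"
  have m_le: "\<forall>i. m \<le> q $ i"
    unfolding m_def by (auto intro: Min_le)
  have m_pos: "m > 0"
    unfolding m_def using q_pos by (subst Min_gr_iff) auto
  define t0 where "t0 = C 0 / m"
  have t0_pos: "t0 > 0"
    unfolding t0_def using m_pos assms(4) by simp
  have "C (- (t0 *\<^sub>R q)) \<le> C 0 - t0 * m"
    using one_invariant_ray_le[OF assms(2,3) m_le] t0_pos by simp
  also have "\<dots> = 0"
    unfolding t0_def using m_pos by simp
  finally have below_zero: "C (- (t0 *\<^sub>R q)) \<le> 0" .
  have "continuous_on {0..t0} (\<lambda>t. C (- (t *\<^sub>R q)))"
    by (rule continuous_on_compose2[OF assms(1)]) (auto intro!: continuous_intros)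
  then obtain t where t: "0 \<le> t" "C (- (t *\<^sub>R q)) = 0"
    using IVT2'[of "\<lambda>t. C (- (t *\<^sub>R q))" t0 0 0] below_zero assms(4) t0_pos by auto
  with assms(4) have "t > 0"
    by (cases "t = 0") auto
  moreover have "s = t" if "C (- (s *\<^sub>R q)) = 0" for s
    using increasing_fn_diff_scaleR_inj[OF assms(2) q_pos, of 0 s t] that t(2) by simp
  ultimately show ?thesis
    using t(2) by blast
qed

theorem lemma4p3:
  fixes C :: "real ^ 'n \<Rightarrow> real"
  assumes "convex_on UNIV C"
    and "increasing_fn C"
    and "one_invariant C"
    and "C 0 > 0"
  shows "\<forall>q :: real ^ 'n. (\<forall>i. q $ i > 0) \<longrightarrow>
           (\<exists>!\<alpha>::real. \<alpha> > 0 \<and> C (- ((1 / \<alpha>) *\<^sub>R q)) = 0)"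
proof (intro allI impI)
  fix q :: "real ^ 'n"
  assume "\<forall>i. q $ i > 0"
  moreover have "continuous_on UNIV C"
    using convex_on_continuous[OF open_UNIV assms(1)] .
  ultimately obtain t where t: "t > 0" "C (- (t *\<^sub>R q)) = 0"
    and unique: "\<And>s. s > 0 \<Longrightarrow> C (- (s *\<^sub>R q)) = 0 \<Longrightarrow> s = t"
    using ex1_zero_on_ray[OF _ assms(2-4)] by metis
  show "\<exists>!\<alpha>::real. \<alpha> > 0 \<and> C (- ((1 / \<alpha>) *\<^sub>R q)) = 0"
  proof (rule ex1I[of _ "1 / t"])
    show "1 / t > 0 \<and> C (- ((1 / (1 / t)) *\<^sub>R q)) = 0"
      using t by simp
    fix \<alpha> :: real
    assume "\<alpha> > 0 \<and> C (- ((1 / \<alpha>) *\<^sub>R q)) = 0"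
    then have "1 / \<alpha> = t"
      using unique by simp
    then show "\<alpha> = 1 / t"
      by auto
  qed
qed

end
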